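(* Assume $d_0\delta>2$ and let $\varepsilon_0=\frac{d_0}{2}-\frac1\delta>0$ and $t=\frac{d_0}{2}$. Let $G=(L\cup R,E)$ be a $(c,d,\alpha,\delta)$-bipartite expander with $L=[n]$, $C_0\subseteq\mathbb{F}_2^d$ a linear code of minimum distance $d_0$, $x\in\mathbb{F}_2^n$ and $y\in T(G,C_0)$ with $d_H(x,y)\le\alpha n$. Let $x'=\mathsf{RandFlip}(x)$. Then $\mathbb{E}[d_H(x',y)]\le\left(1-\frac{\varepsilon_0\delta}{t}\right)d_H(x,y)$.
   Context: Binary linear codes, Hamming distance $d_H$. A bipartite graph $G=(L\cup R,E)$ is $(c,d)$-regular if left degrees are $c$ and right degrees $d$; $N(S)$ is the neighborhood of $S$. A $(c,d,\alpha,\delta)$-bipartite expander ($c,d$ positive integers, $\alpha,\delta\in(0,1]$) is a $(c,d)$-regular bipartite graph with $|N(S)|\ge\delta c|S|$ for every $S\subseteq L$, $|S|\le\alpha|L|$. Tanner code: $L=[n]$, for each $v\in R$ a fixed ordering of $N(v)$ defines $x_{N(v)}\in\mathbb{F}_2^d$, and $T(G,C_0)=\{x: x_{N(v)}\in C_0\ \forall v\in R\}$. For $z\in\mathbb{F}_2^d$, $\mathsf{Decode}(z)$ is the codeword of $C_0$ closest to $z$, ties broken lexicographically. $\mathsf{RandFlip}(x)$: set $t=d_0/2$ and $p_1=\dots=p_n=0$; for each $v\in R$, let $w_v=\mathsf{Decode}(x_{N(v)})$; if $1\le d_H(w_v,x_{N(v)})<t$, let $i$ be the smallest element of $N(v)$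 at which $w_v$ and $x_{N(v)}$ differ and increase $p_i$ by $\frac{t-d_H(w_v,x_{N(v)})}{ct}$. Then flip each $x_i$ independently with probability $p_i$ and return the resulting word. *)

theory Defs
  imports "HOL-Probability.Probability"
begin

(* Hamming distance of two words of F_2^n, coordinates 0..<n (the paper's [n]) *)
definition hamming :: "nat \<Rightarrow> (nat \<Rightarrow> bool) \<Rightarrow> (nat \<Rightarrow> bool) \<Rightarrow> nat" where
  "hamming n x y = card {i\<in>{0..<n}. x i \<noteq> y i}"

definition hamming_list :: "bool list \<Rightarrow> bool list \<Rightarrow> nat" where
  "hamming_list u w = card {k. k < length u \<and> k < length w \<and> u ! k \<noteq> w ! k}"

definition lex_less :: "bool list \<Rightarrow> bool list \<Rightarrow> bool" where
  "lex_less w u \<longleftrightarrow> (\<exists>k < length w. k < length u \<and> take k w = take k u \<and> \<not> w ! k \<and> u ! k)"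

definition linear_code :: "nat \<Rightarrow> bool list set \<Rightarrow> bool" where
  "linear_code d C0 \<longleftrightarrow> (\<forall>w\<in>C0. length w = d) \<and> replicate d False \<in> C0 \<and>
     (\<forall>u\<in>C0. \<forall>w\<in>C0. map2 (\<noteq>) u w \<in> C0)"

definition min_distance :: "bool list set \<Rightarrow> nat \<Rightarrow> bool" where
  "min_distance C0 d0 \<longleftrightarrow> (\<forall>u\<in>C0. \<forall>w\<in>C0. u \<noteq> w \<longrightarrow> d0 \<le> hamming_list u w) \<and>
     (\<exists>u\<in>C0. \<exists>w\<in>C0. u \<noteq> w \<and> hamming_list u w = d0)"

definition decode :: "bool list set \<Rightarrow> bool list \<Rightarrow> bool list" where
  "decode C0 z = (THE w. w \<in> C0 \<and> (\<forall>u\<in>C0. hamming_list w z \<le> hamming_list u z) \<and>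
      (\<forall>u\<in>C0. u \<noteq> w \<and> hamming_list u z = hamming_list w z \<longrightarrow> lex_less w u))"

(* Bipartite graph: left vertices {0..<n}, right vertices R, each v \<in> R has the ordered
   neighbourhood nb v (a list without repetitions).  N(S) = neighbourhood of S \<subseteq> L. *)
definition nbhd :: "'r set \<Rightarrow> ('r \<Rightarrow> nat list) \<Rightarrow> nat set \<Rightarrow> 'r set" where
  "nbhd R nb S = {v\<in>R. \<exists>i\<in>S. i \<in> set (nb v)}"

definition biregular :: "nat \<Rightarrow> 'r set \<Rightarrow> ('r \<Rightarrow> nat list) \<Rightarrow> nat \<Rightarrow> nat \<Rightarrow> bool" where
  "biregular n R nb c d \<longleftrightarrow> finite R \<and>
     (\<forall>v\<in>R. distinct (nb v) \<and> set (nb v) \<subseteq> {0..<n} \<and> length (nb v) = d) \<and>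
     (\<forall>i\<in>{0..<n}. card {v\<in>R. i \<in> set (nb v)} = c)"

definition bipartite_expander ::
  "nat \<Rightarrow> 'r set \<Rightarrow> ('r \<Rightarrow> nat list) \<Rightarrow> nat \<Rightarrow> nat \<Rightarrow> real \<Rightarrow> real \<Rightarrow> bool" where
  "bipartite_expander n R nb c d \<alpha> \<delta> \<longleftrightarrow> 0 < c \<and> 0 < d \<and> 0 < \<alpha> \<and> \<alpha> \<le> 1 \<and> 0 < \<delta> \<and> \<delta> \<le> 1 \<and>
     biregular n R nb c d \<and>
     (\<forall>S. S \<subseteq> {0..<n} \<and> real (card S) \<le> \<alpha> * real n \<longrightarrow>
          real (card (nbhd R nb S)) \<ge> \<delta> * real c * real (card S))"

definition local_view :: "('r \<Rightarrow> nat list) \<Rightarrow> (nat \<Rightarrow> bool) \<Rightarrow> 'r \<Rightarrow> bool list" where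
  "local_view nb x v = map x (nb v)"

definition tanner_code :: "nat \<Rightarrow> 'r set \<Rightarrow> ('r \<Rightarrow> nat list) \<Rightarrow> bool list set \<Rightarrow> (nat \<Rightarrow> bool) set" where
  "tanner_code n R nb C0 = {x. (\<forall>i. i \<ge> n \<longrightarrow> \<not> x i) \<and> (\<forall>v\<in>R. local_view nb x v \<in> C0)}"

definition first_diff :: "('r \<Rightarrow> nat list) \<Rightarrow> (nat \<Rightarrow> bool) \<Rightarrow> bool list \<Rightarrow> 'r \<Rightarrow> nat" where
  "first_diff nb x w v = Min {nb v ! k | k. k < length (nb v) \<and> w ! k \<noteq> x (nb v ! k)}"

definition flip_prob ::
  "'r set \<Rightarrow> ('r \<Rightarrow> nat list) \<Rightarrow> nat \<Rightarrow> bool list set \<Rightarrow> nat \<Rightarrow> (nat \<Rightarrow> bool) \<Rightarrow> nat \<Rightarrow> real" where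
  "flip_prob R nb c C0 d0 x i =
     (let t = real d0 / 2 in
      \<Sum>v\<in>{v\<in>R. let w = decode C0 (local_view nb x v); e = hamming_list w (local_view nb x v)
                 in 1 \<le> e \<and> real e < t \<and> first_diff nb x w v = i}.
        (t - real (hamming_list (decode C0 (local_view nb x v)) (local_view nb x v))) / (real c * t))"

definition rand_flip ::
  "nat \<Rightarrow> 'r set \<Rightarrow> ('r \<Rightarrow> nat list) \<Rightarrow> nat \<Rightarrow> bool list set \<Rightarrow> nat \<Rightarrow> (nat \<Rightarrow> bool) \<Rightarrow> (nat \<Rightarrow> bool) pmf" where
  "rand_flip n R nb c C0 d0 x =
     map_pmf (\<lambda>f i. x i \<noteq> f i)
       (Pi_pmf {0..<n} False (\<lambda>i. bernoulli_pmf (flip_prob R nb c C0 d0 x i)))"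

end

theory Submission
  imports Defs
begin

(* Let S be the set of positions where x and y differ and s_v = |S \<inter> N(v)|. Flipping x_i
   changes d_H(x, y) by -1 if i \<in> S and by +1 otherwise, so E d_H(x', y) = |S| - \<Sum>_i \<plusminus>p_i,
   and the sum splits into contributions of the checks v. If 0 < s_v < t, the check decodes to
   y_{N(v)} and points at an error, gaining (t - s_v)/(ct). If s_v \<ge> t, it may decode wrongly,
   but then d_0 \<le> d_H(w_v, x_{N(v)}) + s_v, so it loses at most (s_v - t)/(ct). Since every
   position lies in c checks, \<Sum>_i \<plusminus>p_i \<ge> |N(S)|/c - |S|/t, and the expansion
   |N(S)| \<ge> \<delta>c|S| gives E d_H(x', y) \<le> (1 - \<delta> + 1/t)|S|. *)

lemma lex_less_irrefl: "\<not> lex_less w w"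
  by (auto simp: lex_less_def)

lemma lex_less_trans:
  assumes "lex_less a b" "lex_less b c"
  shows "lex_less a c"
proof -
  obtain k where k: "k < length a" "k < length b" "take k a = take k b" "\<not> a ! k" "b ! k"
    using assms(1) by (auto simp: lex_less_def)
  obtain l where l: "l < length b" "l < length c" "take l b = take l c" "\<not> b ! l" "c ! l"
    using assms(2) by (auto simp: lex_less_def)
  have agree: "take m u = take m v" "\<And>j. j < m' \<Longrightarrow> j < length u \<Longrightarrow> j < length v \<Longrightarrow> u ! j = v ! j"
    if "take m' u = take m' v" "m \<le> m'" for m m' and u v :: "bool list"
    using that by (metis min.absorb1 take_take, metis nth_take)
  consider "k < l" | "k = l" | "l < k" by linarith
  then show ?thesis
  proof cases
    case 1
    then show ?thesis using k l agree[OF l(3), of k] unfolding lex_less_def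
      by (intro exI[of _ k]) auto
  next
    case 2
    then show ?thesis using k l by auto
  next
    case 3
    then show ?thesis using k l agree[OF k(3), of l] unfolding lex_less_def
      by (intro exI[of _ l]) auto
  qed
qed

lemma lex_less_linear:
  assumes "length u = length w" "u \<noteq> w"
  shows "lex_less u w \<or> lex_less w u"
proof -
  have "\<exists>k. k < length u \<and> u ! k \<noteq> w ! k"
    using assms by (auto simp: list_eq_iff_nth_eq)
  then obtain k where k: "k < length u" "u ! k \<noteq> w ! k"
    and below: "\<forall>j<k. \<not> (j < length u \<and> u ! j \<noteq> w ! j)"
    using exists_least_iff[of "\<lambda>k. k < length u \<and> u ! k \<noteq> w ! k"] by blast
  have "take k u = take k w"
    using k below assms(1) by (intro nth_equalityI) auto
  then show ?thesis
    using k assms(1) unfolding lex_less_def by (cases "u ! k") auto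
qed

lemma finite_strict_linear_has_least:
  assumes "finite A" "A \<noteq> {}"
    and transitive: "\<And>a b c. r a b \<Longrightarrow> r b c \<Longrightarrow> r a c"
    and linear: "\<And>a b. a \<in> A \<Longrightarrow> b \<in> A \<Longrightarrow> a \<noteq> b \<Longrightarrow> r a b \<or> r b a"
  shows "\<exists>m\<in>A. \<forall>a\<in>A. a \<noteq> m \<longrightarrow> r m a"
  using assms(1,2) linear
proof (induction A rule: finite_ne_induct)
  case (insert b A)
  have "\<exists>m\<in>A. \<forall>a\<in>A. a \<noteq> m \<longrightarrow> r m a"
    by (rule insert.IH) (simp add: insert.prems)
  then obtain m where m: "m \<in> A" "\<forall>a\<in>A. a \<noteq> m \<longrightarrow> r m a"
    by blast
  show ?case
  proof (cases "r b m")
    case True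
    then have "\<forall>a\<in>insert b A. a \<noteq> b \<longrightarrow> r b a"
      using m transitive[of b m] by auto
    then show ?thesis
      by (meson insertI1)
  next
    case False
    moreover have "m \<noteq> b"
      using insert.hyps(3) m(1) by blast
    ultimately have "r m b"
      using insert.prems[of m b] m(1) by auto
    then have "\<forall>a\<in>insert b A. a \<noteq> m \<longrightarrow> r m a"
      using m by auto
    then show ?thesis
      by (meson insertCI m(1))
  qed
qed simp

lemma decode_well_defined:
  assumes "finite C0" "C0 \<noteq> {}" "\<And>w. w \<in> C0 \<Longrightarrow> length w = d"
  shows "\<exists>!w. w \<in> C0 \<and> (\<forall>u\<in>C0. hamming_list w z \<le> hamming_list u z) \<and>
      (\<forall>u\<in>C0. u \<noteq> w \<and> hamming_list u z = hamming_list w z \<longrightarrow> lex_less w u)"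
proof -
  define M where "M = {w\<in>C0. \<forall>u\<in>C0. hamming_list w z \<le> hamming_list u z}"
  have "M \<noteq> {}"
    using assms(2) ex_has_least_nat[of "\<lambda>w. w \<in> C0" _ "\<lambda>w. hamming_list w z"]
    unfolding M_def by blast
  moreover have "finite M"
    using assms(1) unfolding M_def by simp
  ultimately obtain w where w: "w \<in> M" "\<forall>u\<in>M. u \<noteq> w \<longrightarrow> lex_less w u"
    using finite_strict_linear_has_least[of M lex_less] lex_less_trans lex_less_linear assms(3)
    unfolding M_def by (metis (no_types, lifting) mem_Collect_eq)
  show ?thesis
  proof (rule ex1I)
    show "w \<in> C0 \<and> (\<forall>u\<in>C0. hamming_list w z \<le> hamming_list u z) \<and>
      (\<forall>u\<in>C0. u \<noteq> w \<and> hamming_list u z = hamming_list w z \<longrightarrow> lex_less w u)"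
      using w unfolding M_def by auto
  next
    fix w' assume w': "w' \<in> C0 \<and> (\<forall>u\<in>C0. hamming_list w' z \<le> hamming_list u z) \<and>
      (\<forall>u\<in>C0. u \<noteq> w' \<and> hamming_list u z = hamming_list w' z \<longrightarrow> lex_less w' u)"
    then have "w' \<in> M"
      unfolding M_def by blast
    show "w' = w"
    proof (rule ccontr)
      assume "w' \<noteq> w"
      moreover have "hamming_list w z = hamming_list w' z"
        using w(1) \<open>w' \<in> M\<close> unfolding M_def by (simp add: le_antisym)
      ultimately have "lex_less w w'" "lex_less w' w"
        using w \<open>w' \<in> M\<close> w' unfolding M_def by auto
      then show False
        using lex_less_trans lex_less_irrefl by blast
    qed
  qed
qed

lemma
  assumes "finite C0" "C0 \<noteq> {}" "\<And>w. w \<in> C0 \<Longrightarrow> length w = d"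
  shows decode_in_code: "decode C0 z \<in> C0"
    and decode_closest: "u \<in> C0 \<Longrightarrow> hamming_list (decode C0 z) z \<le> hamming_list u z"
  using theI'[OF decode_well_defined[OF assms]] unfolding decode_def[symmetric] by blast+

lemma linear_code_finite:
  assumes "linear_code d C0"
  shows "finite C0"
proof (rule finite_subset)
  show "C0 \<subseteq> {w. set w \<subseteq> UNIV \<and> length w = d}"
    using assms unfolding linear_code_def by blast
qed (use finite_lists_length_eq[of "UNIV :: bool set" d] in simp)

lemma hamming_list_commute: "hamming_list u w = hamming_list w u"
  unfolding hamming_list_def by meson

lemma hamming_list_triangle:
  assumes "length a = length b" "length b = length c"
  shows "hamming_list a c \<le> hamming_list a b + hamming_list b c"
proof -
  let ?D = "\<lambda>u w. {k. k < length u \<and> k < length w \<and> u ! k \<noteq> w ! k}"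
  have "hamming_list a c \<le> card (?D a b \<union> ?D b c)"
    unfolding hamming_list_def using assms by (intro card_mono) auto
  also have "\<dots> \<le> hamming_list a b + hamming_list b c"
    unfolding hamming_list_def by (rule card_Un_le)
  finally show ?thesis .
qed

lemma hamming_list_pos_imp_nth_neq:
  "0 < hamming_list u w \<Longrightarrow> \<exists>k<length u. k < length w \<and> u ! k \<noteq> w ! k"
  by (auto simp: hamming_list_def card_gt_0_iff)

lemma hamming_list_map_distinct:
  assumes "distinct l"
  shows "hamming_list (map x l) (map y l) = card {i \<in> set l. x i \<noteq> y i}"
proof -
  let ?K = "{k. k < length l \<and> x (l ! k) \<noteq> y (l ! k)}"
  have "{i \<in> set l. x i \<noteq> y i} = (!) l ` ?K"
    by (auto simp: in_set_conv_nth)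
  moreover have "inj_on ((!) l) ?K"
    using assms by (auto simp: inj_on_def nth_eq_iff_index_eq)
  moreover have "hamming_list (map x l) (map y l) = card ?K"
    unfolding hamming_list_def by (rule arg_cong[where f = card]) auto
  ultimately show ?thesis
    by (simp add: card_image)
qed

lemma first_diff_in_nbhd:
  assumes "0 < hamming_list w (local_view nb x v)" "length w = length (nb v)"
  shows "\<exists>k<length (nb v). first_diff nb x w v = nb v ! k \<and> w ! k \<noteq> x (nb v ! k)"
proof -
  let ?K = "{k. k < length (nb v) \<and> w ! k \<noteq> x (nb v ! k)}"
  have "?K \<noteq> {}"
    using hamming_list_pos_imp_nth_neq[OF assms(1)] assms(2) by (auto simp: local_view_def)
  then have "Min ((!) (nb v) ` ?K) \<in> (!) (nb v) ` ?K"
    by (intro Min_in) auto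
  moreover have "first_diff nb x w v = Min ((!) (nb v) ` ?K)"
    unfolding first_diff_def by (rule arg_cong[where f = Min]) blast
  ultimately show ?thesis
    by auto
qed

lemma expectation_hamming_flip:
  fixes p :: "nat \<Rightarrow> real"
  assumes "\<And>i. i < n \<Longrightarrow> 0 \<le> p i \<and> p i \<le> 1"
  shows "measure_pmf.expectation
      (map_pmf (\<lambda>f i. x i \<noteq> f i) (Pi_pmf {0..<n} False (\<lambda>i. bernoulli_pmf (p i))))
      (\<lambda>x'. real (hamming n x' y))
    = (\<Sum>i<n. if x i \<noteq> y i then 1 - p i else p i)"
proof -
  define F where "F = Pi_pmf {0..<n} False (\<lambda>i. bernoulli_pmf (p i))"
  define h where "h i b = (of_bool ((x i \<noteq> b) \<noteq> y i) :: real)" for i b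
  have marginal: "measure_pmf.expectation F (\<lambda>f. h i (f i)) = (if x i \<noteq> y i then 1 - p i else p i)"
    if "i < n" for i
  proof -
    have "map_pmf (\<lambda>f. f i) F = bernoulli_pmf (p i)"
      unfolding F_def using Pi_pmf_component[of "{0..<n}" i False] that by simp
    then have "measure_pmf.expectation F (\<lambda>f. h i (f i)) = measure_pmf.expectation (bernoulli_pmf (p i)) (h i)"
      by (metis integral_map_pmf)
    then show ?thesis
      using assms[OF that] by (simp add: h_def)
  qed
  have "real (hamming n (\<lambda>i. x i \<noteq> f i) y) = (\<Sum>i<n. h i (f i))" for f
    unfolding hamming_def h_def by (simp add: Int_def lessThan_atLeast0)
  then have "measure_pmf.expectation (map_pmf (\<lambda>f i. x i \<noteq> f i) F) (\<lambda>x'. real (hamming n x' y))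
      = measure_pmf.expectation F (\<lambda>f. \<Sum>i<n. h i (f i))"
    by simp
  also have "\<dots> = (\<Sum>i<n. measure_pmf.expectation F (\<lambda>f. h i (f i)))"
    by (intro Bochner_Integration.integral_sum measure_pmf.integrable_const_bound[where B = 1])
      (simp_all add: h_def)
  also have "\<dots> = (\<Sum>i<n. if x i \<noteq> y i then 1 - p i else p i)"
    using marginal by simp
  finally show ?thesis
    unfolding F_def .
qed

locale tanner_flip =
  fixes n :: nat and R :: "'r set" and nb :: "'r \<Rightarrow> nat list" and c d d0 :: nat
    and C0 :: "bool list set" and x y :: "nat \<Rightarrow> bool"
  assumes biregular: "biregular n R nb c d"
    and c_pos: "0 < c"
    and code: "linear_code d C0"
    and distance: "\<And>u w. u \<in> C0 \<Longrightarrow> w \<in> C0 \<Longrightarrow> u \<noteq> w \<Longrightarrow> d0 \<le> hamming_list u w"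
    and d0_pos: "0 < d0"
    and y_in_code: "y \<in> tanner_code n R nb C0"
begin

(* In the notation of RandFlip, dec v is w_v, and an active check v adds flip_weight v to p_i
   for i = flip_pos v. Flipping x_i decreases d_H(x, y) by flip_gain i. *)

definition t :: real where
  "t = real d0 / 2"

definition errors :: "nat set" where
  "errors = {i \<in> {0..<n}. x i \<noteq> y i}"

definition local_errors :: "'r \<Rightarrow> nat" where
  "local_errors v = hamming_list (local_view nb x v) (local_view nb y v)"

definition dec :: "'r \<Rightarrow> bool list" where
  "dec v = decode C0 (local_view nb x v)"

definition dec_dist :: "'r \<Rightarrow> nat" where
  "dec_dist v = hamming_list (dec v) (local_view nb x v)"

definition active :: "'r \<Rightarrow> bool" where
  "active v \<longleftrightarrow> 0 < dec_dist v \<and> real (dec_dist v) < t"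

definition flip_pos :: "'r \<Rightarrow> nat" where
  "flip_pos v = first_diff nb x (dec v) v"

definition flip_weight :: "'r \<Rightarrow> real" where
  "flip_weight v = (t - real (dec_dist v)) / (real c * t)"

definition flip_gain :: "nat \<Rightarrow> real" where
  "flip_gain i = (if i \<in> errors then 1 else - 1)"

lemma t_pos: "0 < t"
  unfolding t_def using d0_pos by simp

lemma finite_R: "finite R"
  using biregular unfolding biregular_def by blast

lemma
  assumes "v \<in> R"
  shows distinct_nb: "distinct (nb v)"
    and set_nb_subset: "set (nb v) \<subseteq> {0..<n}"
    and length_nb: "length (nb v) = d"
  using biregular assms unfolding biregular_def by blast+

lemma degree: "i < n \<Longrightarrow> card {v \<in> R. i \<in> set (nb v)} = c"
  using biregular unfolding biregular_def by simp

lemma degree_le: "card {v \<in> R. i \<in> set (nb v)} \<le> c"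
proof (cases "i < n")
  case False
  then have "{v \<in> R. i \<in> set (nb v)} = {}"
    using set_nb_subset by fastforce
  then show ?thesis
    by (metis card.empty le0)
qed (simp add: degree)

lemma length_local_view: "v \<in> R \<Longrightarrow> length (local_view nb z v) = d"
  by (simp add: local_view_def length_nb)

lemma local_view_y_in_code: "v \<in> R \<Longrightarrow> local_view nb y v \<in> C0"
  using y_in_code unfolding tanner_code_def by blast

lemma code_length: "w \<in> C0 \<Longrightarrow> length w = d"
  using code unfolding linear_code_def by blast

lemma
  shows dec_in_code: "dec v \<in> C0"
    and dec_closest: "u \<in> C0 \<Longrightarrow> dec_dist v \<le> hamming_list u (local_view nb x v)"
proof -
  have "finite C0" "C0 \<noteq> {}"
    using code linear_code_finite unfolding linear_code_def by blast+
  then show "dec v \<in> C0" "u \<in> C0 \<Longrightarrow> dec_dist v \<le> hamming_list u (local_view nb x v)"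
    unfolding dec_def dec_dist_def using decode_in_code decode_closest code_length by blast+
qed

lemma local_errors_eq_card:
  assumes "v \<in> R"
  shows "local_errors v = card (errors \<inter> set (nb v))"
proof -
  have "local_errors v = card {i \<in> set (nb v). x i \<noteq> y i}"
    unfolding local_errors_def local_view_def by (rule hamming_list_map_distinct[OF distinct_nb[OF assms]])
  also have "{i \<in> set (nb v). x i \<noteq> y i} = errors \<inter> set (nb v)"
    using set_nb_subset[OF assms] unfolding errors_def by auto
  finally show ?thesis .
qed

lemma dec_dist_le_local_errors: "v \<in> R \<Longrightarrow> dec_dist v \<le> local_errors v"
  using dec_closest[OF local_view_y_in_code, of v v]
  unfolding local_errors_def by (simp add: hamming_list_commute)

lemma dec_dist_eq_if_correct: "dec v = local_view nb y v \<Longrightarrow> dec_dist v = local_errors v"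
  unfolding dec_dist_def local_errors_def by (simp add: hamming_list_commute)

lemma distance_le_if_miscorrect:
  assumes "v \<in> R" "dec v \<noteq> local_view nb y v"
  shows "d0 \<le> dec_dist v + local_errors v"
proof -
  have "d0 \<le> hamming_list (dec v) (local_view nb y v)"
    using distance[OF dec_in_code local_view_y_in_code] assms by blast
  also have "\<dots> \<le> dec_dist v + local_errors v"
    unfolding dec_dist_def local_errors_def using assms(1)
    by (intro hamming_list_triangle) (simp_all add: length_local_view code_length[OF dec_in_code])
  finally show ?thesis .
qed

lemma dec_correct_if_few_errors:
  assumes "v \<in> R" "real (local_errors v) < t"
  shows "dec v = local_view nb y v"
proof (rule ccontr)
  assume "dec v \<noteq> local_view nb y v"
  then have "real d0 \<le> real (dec_dist v) + real (local_errors v)"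
    using distance_le_if_miscorrect[OF assms(1)] by simp
  moreover have "dec_dist v \<le> local_errors v"
    using dec_dist_le_local_errors[OF assms(1)] .
  ultimately show False
    using assms(2) unfolding t_def by linarith
qed

lemma
  assumes "v \<in> R" "active v"
  shows flip_pos_in_nbhd: "flip_pos v \<in> set (nb v)"
    and flip_pos_in_errors: "dec v = local_view nb y v \<Longrightarrow> flip_pos v \<in> errors"
proof -
  have "0 < hamming_list (dec v) (local_view nb x v)"
    using assms(2) unfolding active_def dec_dist_def by simp
  moreover have "length (dec v) = length (nb v)"
    using assms(1) code_length[OF dec_in_code] length_nb by simp
  ultimately have "\<exists>k<length (nb v). flip_pos v = nb v ! k \<and> dec v ! k \<noteq> x (nb v ! k)"
    unfolding flip_pos_def by (rule first_diff_in_nbhd)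
  then obtain k where k: "k < length (nb v)" "flip_pos v = nb v ! k" "dec v ! k \<noteq> x (nb v ! k)"
    by blast
  then show "flip_pos v \<in> set (nb v)"
    by simp
  then have "flip_pos v < n"
    using set_nb_subset[OF assms(1)] by auto
  then show "flip_pos v \<in> errors" if "dec v = local_view nb y v"
    using k that unfolding errors_def local_view_def by auto
qed

lemma flip_prob_eq:
  "flip_prob R nb c C0 d0 x i = (\<Sum>v \<in> {v \<in> R. active v \<and> flip_pos v = i}. flip_weight v)"
  unfolding flip_prob_def active_def flip_pos_def flip_weight_def dec_dist_def dec_def t_def Let_def
  by (simp add: conj_assoc Suc_le_eq)

lemma
  assumes "active v"
  shows flip_weight_nonneg: "0 \<le> flip_weight v"
    and flip_weight_le: "flip_weight v \<le> 1 / real c"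
  using assms t_pos c_pos unfolding active_def flip_weight_def by (auto simp: field_simps)

lemma flip_prob_bounds: "0 \<le> flip_prob R nb c C0 d0 x i \<and> flip_prob R nb c C0 d0 x i \<le> 1"
proof -
  let ?V = "{v \<in> R. active v \<and> flip_pos v = i}"
  have "?V \<subseteq> {v \<in> R. i \<in> set (nb v)}"
    using flip_pos_in_nbhd by blast
  then have "card ?V \<le> card {v \<in> R. i \<in> set (nb v)}"
    using finite_R by (intro card_mono) auto
  also have "\<dots> \<le> c"
    by (rule degree_le)
  finally have "card ?V \<le> c" .
  have "(\<Sum>v \<in> ?V. flip_weight v) \<le> real (card ?V) * (1 / real c)"
    using flip_weight_le by (intro sum_bounded_above) auto
  also have "\<dots> \<le> 1"
    using \<open>card ?V \<le> c\<close> c_pos by (simp add: field_simps)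
  finally show ?thesis
    unfolding flip_prob_eq using flip_weight_nonneg by (auto intro: sum_nonneg)
qed

lemma neg_flip_weight_ge:
  assumes "v \<in> R" "active v" "t \<le> real (local_errors v)"
  shows "(t - real (local_errors v)) / (real c * t) \<le> - flip_weight v"
proof -
  have "dec v \<noteq> local_view nb y v"
    using assms(2,3) dec_dist_eq_if_correct unfolding active_def by auto
  then have "real d0 \<le> real (dec_dist v) + real (local_errors v)"
    using distance_le_if_miscorrect[OF assms(1)] by linarith
  then have "t - real (local_errors v) \<le> - (t - real (dec_dist v))"
    unfolding t_def by simp
  then show ?thesis
    unfolding flip_weight_def minus_divide_left using c_pos t_pos by (intro divide_right_mono) auto
qed

lemma check_gain_ge:
  assumes "v \<in> R"
  shows "(t * of_bool (0 < local_errors v) - real (local_errors v)) / (real c * t)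
    \<le> (if active v then flip_gain (flip_pos v) * flip_weight v else 0)"
proof -
  have ct: "0 < real c * t"
    using c_pos t_pos by simp
  consider (none) "local_errors v = 0"
    | (few) "0 < local_errors v" "real (local_errors v) < t"
    | (many) "t \<le> real (local_errors v)"
    by fastforce
  then show ?thesis
  proof cases
    case none
    then have "\<not> active v"
      using dec_dist_le_local_errors[OF assms] unfolding active_def by simp
    then show ?thesis
      using none by simp
  next
    case few
    have correct: "dec v = local_view nb y v"
      using dec_correct_if_few_errors[OF assms few(2)] .
    then have "active v"
      using few dec_dist_eq_if_correct unfolding active_def by simp
    moreover have "flip_gain (flip_pos v) = 1"
      using flip_pos_in_errors[OF assms \<open>active v\<close> correct] unfolding flip_gain_def by simp
    ultimately show ?thesis
      using few dec_dist_eq_if_correct[OF correct] unfolding flip_weight_def by simp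
  next
    case many
    then have "0 < local_errors v"
      using t_pos by linarith
    then have lhs: "(t * of_bool (0 < local_errors v) - real (local_errors v)) / (real c * t)
        = (t - real (local_errors v)) / (real c * t)"
      by simp
    show ?thesis
    proof (cases "active v")
      case False
      then show ?thesis
        unfolding lhs using many ct by (simp add: divide_nonpos_pos)
    next
      case True
      have "(t - real (local_errors v)) / (real c * t) \<le> - flip_weight v"
        using neg_flip_weight_ge[OF assms True many] .
      also have "\<dots> \<le> flip_gain (flip_pos v) * flip_weight v"
        using flip_weight_nonneg[OF True] unfolding flip_gain_def by simp
      finally show ?thesis
        unfolding lhs using True by simp
    qed
  qed
qed

lemma sum_local_errors: "(\<Sum>v\<in>R. local_errors v) = c * card errors"
proof -
  have "(\<Sum>v\<in>R. local_errors v) = (\<Sum>v\<in>R. card {i \<in> errors. i \<in> set (nb v)})"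
    using local_errors_eq_card by (intro sum.cong) (auto simp: Int_def)
  also have "\<dots> = c * card errors"
    using finite_R by (intro sum_multicount) (auto simp: errors_def degree)
  finally show ?thesis .
qed

lemma nbhd_errors_eq: "nbhd R nb errors = {v \<in> R. 0 < local_errors v}"
  unfolding nbhd_def using local_errors_eq_card by (auto simp: card_gt_0_iff)

lemma total_gain_ge:
  "(t * card (nbhd R nb errors) - real c * card errors) / (real c * t)
    \<le> (\<Sum>i<n. flip_gain i * flip_prob R nb c C0 d0 x i)"
proof -
  let ?A = "{v \<in> R. active v}"
  let ?G = "\<lambda>v. flip_gain (flip_pos v) * flip_weight v"
  have "(\<Sum>v\<in>R. real (local_errors v)) = real c * card errors"
    by (simp flip: of_nat_sum add: sum_local_errors)
  then have "(t * card (nbhd R nb errors) - real c * card errors) / (real c * t)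
      = (\<Sum>v\<in>R. (t * of_bool (0 < local_errors v) - real (local_errors v)) / (real c * t))"
    using finite_R
    by (simp add: nbhd_errors_eq sum_subtractf sum_divide_distrib[symmetric] sum_distrib_left[symmetric]
        Collect_conj_eq Int_commute)
  also have "\<dots> \<le> (\<Sum>v\<in>R. if active v then ?G v else 0)"
    by (intro sum_mono check_gain_ge)
  also have "\<dots> = (\<Sum>v\<in>?A. ?G v)"
    using finite_R by (simp add: sum.inter_filter)
  also have "\<dots> = (\<Sum>i<n. \<Sum>v\<in>{v \<in> ?A. flip_pos v = i}. ?G v)"
    using finite_R flip_pos_in_nbhd set_nb_subset by (intro sum.group[symmetric]) fastforce+
  also have "\<dots> = (\<Sum>i<n. flip_gain i * flip_prob R nb c C0 d0 x i)"
    unfolding flip_prob_eq sum_distrib_left by (intro sum.cong) auto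
  finally show ?thesis .
qed

lemma expected_distance_eq:
  "measure_pmf.expectation (rand_flip n R nb c C0 d0 x) (\<lambda>x'. real (hamming n x' y))
     = card errors - (\<Sum>i<n. flip_gain i * flip_prob R nb c C0 d0 x i)"
proof -
  let ?p = "flip_prob R nb c C0 d0 x"
  have "measure_pmf.expectation (rand_flip n R nb c C0 d0 x) (\<lambda>x'. real (hamming n x' y))
      = (\<Sum>i<n. if x i \<noteq> y i then 1 - ?p i else ?p i)"
    unfolding rand_flip_def by (rule expectation_hamming_flip) (use flip_prob_bounds in blast)
  also have "\<dots> = (\<Sum>i<n. of_bool (i \<in> errors) - flip_gain i * ?p i)"
    by (intro sum.cong) (auto simp: errors_def flip_gain_def)
  also have "\<dots> = card errors - (\<Sum>i<n. flip_gain i * ?p i)"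
    by (simp add: sum_subtractf errors_def atLeast0LessThan lessThan_def Collect_conj_eq Int_commute)
  finally show ?thesis .
qed

lemma expected_distance_le:
  "measure_pmf.expectation (rand_flip n R nb c C0 d0 x) (\<lambda>x'. real (hamming n x' y))
     \<le> card errors + card errors / t - card (nbhd R nb errors) / c"
proof -
  have "(t * card (nbhd R nb errors) - real c * card errors) / (real c * t)
      = card (nbhd R nb errors) / c - card errors / t"
    using c_pos t_pos by (simp add: field_simps)
  then show ?thesis
    unfolding expected_distance_eq using total_gain_ge by linarith
qed

end

theorem theorem3p2:
  fixes n c d d0 :: nat and R :: "'r set" and nb :: "'r \<Rightarrow> nat list"
    and \<alpha> \<delta> :: real and C0 :: "bool list set" and x y :: "nat \<Rightarrow> bool"
  assumes "bipartite_expander n R nb c d \<alpha> \<delta>"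
    and "linear_code d C0"
    and "min_distance C0 d0"
    and "real d0 * \<delta> > 2"
    and "\<forall>i. i \<ge> n \<longrightarrow> \<not> x i"
    and "y \<in> tanner_code n R nb C0"
    and "real (hamming n x y) \<le> \<alpha> * real n"
  shows "measure_pmf.expectation (rand_flip n R nb c C0 d0 x) (\<lambda>x'. real (hamming n x' y))
           \<le> (1 - ((real d0 / 2 - 1 / \<delta>) * \<delta>) / (real d0 / 2)) * real (hamming n x y)"
proof -
  have "0 < c" "0 < \<delta>" "biregular n R nb c d"
    and expansion: "\<And>S. S \<subseteq> {0..<n} \<Longrightarrow> real (card S) \<le> \<alpha> * real n \<Longrightarrow>
      \<delta> * real c * real (card S) \<le> real (card (nbhd R nb S))"
    using assms(1) unfolding bipartite_expander_def by auto
  moreover have "0 < d0"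
    using assms(4) by (cases d0) auto
  ultimately interpret tanner_flip n R nb c d d0 C0 x y
    using assms(2,3,6) by unfold_locales (auto simp: min_distance_def)
  have hamming_eq: "hamming n x y = card errors"
    unfolding hamming_def errors_def ..
  have "\<delta> * real c * real (card errors) \<le> real (card (nbhd R nb errors))"
    using assms(7) unfolding hamming_eq by (intro expansion) (auto simp: errors_def)
  then have "\<delta> * real (card errors) \<le> real (card (nbhd R nb errors)) / real c"
    using \<open>0 < c\<close> by (simp add: field_simps)
  moreover have "(1 - ((real d0 / 2 - 1 / \<delta>) * \<delta>) / (real d0 / 2)) * real (card errors)
      = card errors + card errors / t - \<delta> * card errors"
    using \<open>0 < \<delta>\<close> \<open>0 < d0\<close> unfolding t_def by (simp add: field_simps)
  ultimately show ?thesis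
    unfolding hamming_eq using expected_distance_le by linarith
qed

end
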